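(* Let $I=(N,A,V)$ be an instance with three agents $N=\{1,2,3\}$, binary valuations ($V_i(j,a)\in\{0,1\}$) satisfying the no-chore assumption ($V_i(i,a)\ge V_i(j,a)$ for all $i,j,a$). Suppose there is an agent $i\in N$ such that $\Delta_{ij}(a)=0$ for every item $a\in A$ and every $j\in N$. Then $I$ admits an EF1 complete allocation.
   Context: An allocation $\pi=(\pi_1,\pi_2,\pi_3)$ consists of pairwise disjoint bundles (complete if they cover $A$); $\pi(a)$ is the agent receiving $a$; $V_i(j,a)$ is agent $i$'s value when item $a$ goes to $j$; $V_i(\pi)=\sum_{a\text{ assigned in }\pi}V_i(\pi(a),a)$; $\pi^{i\leftrightarrow j}$ swaps bundles of $i$ and $j$. A complete allocation $\pi$ is EF1 if for all $i,j$ there exist $C\subseteq A$ with $|C|\le1$ and the allocation $\lambda$ with $\lambda_\ell=\pi_\ell\setminus C$ for all $\ell$ such that $V_i(\lambda)\ge V_i(\lambda^{i\leftrightarrow j})$. $\Delta_{ij}(a)=V_i(i,a)-V_i(j,a)$. *)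

theory Defs
  imports Complex_Main
begin

(* V i j a is agent i's value when item a
   goes to agent j. *)

definition agents :: "nat set" where
  "agents = {1, 2, 3}"

definition is_allocation :: "'a set \<Rightarrow> (nat \<Rightarrow> 'a set) \<Rightarrow> bool" where
  "is_allocation A \<pi> \<longleftrightarrow>
     (\<forall>l\<in>agents. \<pi> l \<subseteq> A) \<and>
     (\<forall>l\<in>agents. \<forall>m\<in>agents. l \<noteq> m \<longrightarrow> \<pi> l \<inter> \<pi> m = {})"

definition complete_allocation :: "'a set \<Rightarrow> (nat \<Rightarrow> 'a set) \<Rightarrow> bool" where
  "complete_allocation A \<pi> \<longleftrightarrow> is_allocation A \<pi> \<and> (\<Union>l\<in>agents. \<pi> l) = A"

(* V_i(pi) = sum over assigned items a of V_i(pi(a), a); since bundles are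
   disjoint this is the sum over agents j of the values of items in pi j. *)
definition alloc_val :: "(nat \<Rightarrow> nat \<Rightarrow> 'a \<Rightarrow> real) \<Rightarrow> nat \<Rightarrow> (nat \<Rightarrow> 'a set) \<Rightarrow> real" where
  "alloc_val V i \<pi> = (\<Sum>j\<in>agents. \<Sum>a\<in>\<pi> j. V i j a)"

definition swap_bundles :: "(nat \<Rightarrow> 'a set) \<Rightarrow> nat \<Rightarrow> nat \<Rightarrow> (nat \<Rightarrow> 'a set)" where
  "swap_bundles \<pi> i j = \<pi>(i := \<pi> j, j := \<pi> i)"

definition EF1 :: "'a set \<Rightarrow> (nat \<Rightarrow> nat \<Rightarrow> 'a \<Rightarrow> real) \<Rightarrow> (nat \<Rightarrow> 'a set) \<Rightarrow> bool" where
  "EF1 A V \<pi> \<longleftrightarrow> complete_allocation A \<pi> \<and>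
     (\<forall>i\<in>agents. \<forall>j\<in>agents. \<exists>C. C \<subseteq> A \<and> card C \<le> 1 \<and>
        (let lam = (\<lambda>l. \<pi> l - C) in alloc_val V i lam \<ge> alloc_val V i (swap_bundles lam i j)))"

definition Delta :: "(nat \<Rightarrow> nat \<Rightarrow> 'a \<Rightarrow> real) \<Rightarrow> nat \<Rightarrow> nat \<Rightarrow> 'a \<Rightarrow> real" where
  "Delta V i j a = V i i a - V i j a"

end

theory Submission
  imports Defs
begin

(* Agent i is indifferent to the allocation, so it can be given nothing.  Between the other
   two agents k and l, the items that both of them value are split as evenly as possible,
   with the odd item going to k; the items that l does not value also go to k, and all
   remaining items go to l.  With binary valuations, envy is counted in items: k values
   at least as many items in its own bundle as in l's, and l's envy towards k disappears
   once the odd item is removed. *)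

lemma obtain_halving_split:
  assumes "finite B"
  obtains B1 B2 C where "B = B1 \<union> B2 \<union> C" "B1 \<inter> B2 = {}" "C \<inter> (B1 \<union> B2) = {}"
    "card B1 = card B2" "card C \<le> 1"
proof -
  obtain C where C: "C \<subseteq> B" "card C = card B mod 2"
    using obtain_subset_with_card_n[of "card B mod 2" B] by auto
  have even_rest: "card (B - C) = 2 * (card (B - C) div 2)"
    using C assms by (simp add: card_Diff_subset finite_subset)
  obtain B1 where B1: "B1 \<subseteq> B - C" "card B1 = card (B - C) div 2"
    using obtain_subset_with_card_n[of "card (B - C) div 2" "B - C"] by auto
  have "card (B - C - B1) = card B1"
    using B1 even_rest assms by (simp add: card_Diff_subset finite_subset)
  then show thesis
    using C B1 by (intro that[of B1 "B - C - B1" C]) auto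
qed

lemma obtain_two_agent_split:
  assumes "finite A"
  obtains X Y C where "X \<inter> Y = {}" "X \<union> Y = A"
    "card (Y \<inter> P) \<le> card (X \<inter> P)"
    "C \<subseteq> X" "card C \<le> 1" "card ((X - C) \<inter> Q) \<le> card (Y \<inter> Q)"
proof -
  obtain B1 B2 C where B: "A \<inter> P \<inter> Q = B1 \<union> B2 \<union> C" "B1 \<inter> B2 = {}" "C \<inter> (B1 \<union> B2) = {}"
    "card B1 = card B2" "card C \<le> 1"
    using obtain_halving_split[of "A \<inter> P \<inter> Q"] assms by auto
  then have parts: "B1 \<subseteq> A \<inter> P \<inter> Q" "B2 \<subseteq> A \<inter> P \<inter> Q" "C \<subseteq> A \<inter> P \<inter> Q"
    by auto
  define X where "X = B1 \<union> C \<union> (A - Q)"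
  have "X \<subseteq> A"
    using parts by (auto simp: X_def)
  then have "finite X"
    using assms finite_subset by blast
  have "(A - X) \<inter> P = B2"
    using B parts by (auto simp: X_def)
  moreover have "card B2 \<le> card (X \<inter> P)"
    unfolding \<open>card B1 = card B2\<close>[symmetric] using parts \<open>finite X\<close>
    by (intro card_mono) (auto simp: X_def)
  moreover have "(X - C) \<inter> Q = B1"
    using B by (auto simp: X_def)
  moreover have "card B1 \<le> card ((A - X) \<inter> Q)"
    unfolding \<open>card B1 = card B2\<close> using B parts assms by (intro card_mono) (auto simp: X_def)
  ultimately show thesis
    using B by (intro that[of X "A - X" C]) (auto simp: X_def)
qed

lemma sum_zero_one_eq_card:
  fixes f :: "'a \<Rightarrow> real"
  assumes "finite A" "S \<subseteq> A" "\<forall>a\<in>A. f a \<in> {0, 1}"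
  shows "sum f S = card (S \<inter> {a\<in>A. f a \<noteq> 0})"
proof -
  have "sum f S = (\<Sum>a\<in>S. of_bool (f a \<noteq> 0))"
    using assms by (intro sum.cong) auto
  also have "\<dots> = card (S \<inter> {a. f a \<noteq> 0})"
    using assms by (simp add: finite_subset)
  also have "S \<inter> {a. f a \<noteq> 0} = S \<inter> {a\<in>A. f a \<noteq> 0}"
    using assms(2) by blast
  finally show ?thesis .
qed

lemma Delta_zero_one:
  assumes "V i i a \<in> {0, 1}" "V i j a \<in> {0, 1}" "V i i a \<ge> V i j a"
  shows "Delta V i j a \<in> {0, 1}"
  using assms by (auto simp: Delta_def)

lemma agents_other_two:
  assumes "i \<in> agents"
  obtains k l where "agents = {i, k, l}" "i \<noteq> k" "i \<noteq> l" "k \<noteq> l"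
proof -
  have "i = 1 \<or> i = 2 \<or> i = 3" using assms by (simp add: agents_def)
  then show thesis
    by (intro that[of "if i = 1 then 2 else 1" "if i = 3 then 2 else 3"]) (auto simp: agents_def)
qed

lemma alloc_val_minus_swap_bundles:
  assumes "i \<in> agents" "j \<in> agents" "i \<noteq> j"
  shows "alloc_val V i \<pi> - alloc_val V i (swap_bundles \<pi> i j) =
    sum (Delta V i j) (\<pi> i) - sum (Delta V i j) (\<pi> j)"
  using assms by (auto simp: agents_def alloc_val_def swap_bundles_def Delta_def sum_subtractf)

lemma EF1_if_Delta_sums_le:
  assumes "complete_allocation A \<pi>"
    and "\<And>x y. x \<in> agents \<Longrightarrow> y \<in> agents \<Longrightarrow> x \<noteq> y \<Longrightarrow>
      \<exists>C\<subseteq>A. card C \<le> 1 \<and> sum (Delta V x y) (\<pi> y - C) \<le> sum (Delta V x y) (\<pi> x - C)"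
  shows "EF1 A V \<pi>"
  unfolding EF1_def Let_def
proof (intro conjI assms(1) ballI)
  fix x y assume xy: "x \<in> agents" "y \<in> agents"
  show "\<exists>C\<subseteq>A. card C \<le> 1 \<and>
    alloc_val V x (swap_bundles (\<lambda>l. \<pi> l - C) x y) \<le> alloc_val V x (\<lambda>l. \<pi> l - C)"
  proof (cases "x = y")
    case True
    then show ?thesis by (intro exI[of _ "{}"]) (simp add: swap_bundles_def)
  next
    case False
    then obtain C where "C \<subseteq> A" "card C \<le> 1"
      "sum (Delta V x y) (\<pi> y - C) \<le> sum (Delta V x y) (\<pi> x - C)"
      using assms(2) xy by blast
    with alloc_val_minus_swap_bundles[OF xy False, of V "\<lambda>l. \<pi> l - C"] show ?thesis
      by (intro exI[of _ C]) auto
  qed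
qed

lemma EF1_of_two_agent_split:
  assumes agents: "agents = {i, k, l}" "i \<noteq> k" "i \<noteq> l" "k \<noteq> l"
    and "finite A"
    and zero_one: "\<forall>x\<in>agents. \<forall>y\<in>agents. \<forall>a\<in>A. Delta V x y a \<in> {0, 1}"
    and indifferent: "\<forall>y\<in>agents. \<forall>a\<in>A. Delta V i y a = 0"
    and split: "X \<inter> Y = {}" "X \<union> Y = A"
    and k_envy_free: "card (Y \<inter> {a\<in>A. Delta V k l a \<noteq> 0}) \<le> card (X \<inter> {a\<in>A. Delta V k l a \<noteq> 0})"
    and l_envy_free_up_to_C: "C \<subseteq> X" "card C \<le> 1"
      "card ((X - C) \<inter> {a\<in>A. Delta V l k a \<noteq> 0}) \<le> card (Y \<inter> {a\<in>A. Delta V l k a \<noteq> 0})"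
  shows "EF1 A V ((\<lambda>_. {})(k := X, l := Y))" (is "EF1 A V ?\<pi>")
proof (rule EF1_if_Delta_sums_le)
  show "complete_allocation A ?\<pi>"
    using agents split unfolding complete_allocation_def is_allocation_def by auto
  fix x y assume xy: "x \<in> agents" "y \<in> agents" "x \<noteq> y"
  have count: "sum (Delta V x y) S = card (S \<inter> {a\<in>A. Delta V x y a \<noteq> 0})" if "S \<subseteq> A" for S
    using sum_zero_one_eq_card[OF \<open>finite A\<close> that] zero_one xy by blast
  have bundles: "?\<pi> n \<subseteq> A" for n
    using split by auto
  consider "x = i" | "y = i" | "x = k" "y = l" | "x = l" "y = k"
    using agents xy by auto
  then show "\<exists>C\<subseteq>A. card C \<le> 1 \<and> sum (Delta V x y) (?\<pi> y - C) \<le> sum (Delta V x y) (?\<pi> x - C)"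
  proof cases
    case 1
    then have "sum (Delta V x y) S = 0" if "S \<subseteq> A" for S
      using indifferent xy that by (intro sum.neutral) auto
    then show ?thesis
      using bundles by (intro exI[of _ "{}"]) auto
  next
    case 2
    then show ?thesis
      using agents count bundles by (intro exI[of _ "{}"]) auto
  next
    case 3
    then show ?thesis
      using agents k_envy_free count split by (intro exI[of _ "{}"]) auto
  next
    case 4
    have "Y - C = Y"
      using split l_envy_free_up_to_C by blast
    have "sum (Delta V x y) (?\<pi> y - C) = card ((X - C) \<inter> {a\<in>A. Delta V l k a \<noteq> 0})"
      using 4 agents split count[of "X - C"] by auto
    also have "\<dots> \<le> card (Y \<inter> {a\<in>A. Delta V l k a \<noteq> 0})"
      using l_envy_free_up_to_C by simp
    also have "\<dots> = sum (Delta V x y) (?\<pi> x - C)"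
      using 4 agents split \<open>Y - C = Y\<close> count[of Y] by auto
    finally show ?thesis
      using l_envy_free_up_to_C split by (intro exI[of _ C]) auto
  qed
qed

theorem lemma5:
  fixes A :: "'a set" and V :: "nat \<Rightarrow> nat \<Rightarrow> 'a \<Rightarrow> real"
  assumes fin: "finite A"
    and binary: "\<forall>i\<in>agents. \<forall>j\<in>agents. \<forall>a\<in>A. V i j a \<in> {0, 1}"
    and no_chore: "\<forall>i\<in>agents. \<forall>j\<in>agents. \<forall>a\<in>A. V i i a \<ge> V i j a"
    and special: "\<exists>i\<in>agents. \<forall>a\<in>A. \<forall>j\<in>agents. Delta V i j a = 0"
  shows "\<exists>\<pi>. complete_allocation A \<pi> \<and> EF1 A V \<pi>"
proof -
  obtain i where "i \<in> agents" and indifferent: "\<forall>y\<in>agents. \<forall>a\<in>A. Delta V i y a = 0"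
    using special by blast
  then obtain k l where agents: "agents = {i, k, l}" "i \<noteq> k" "i \<noteq> l" "k \<noteq> l"
    using agents_other_two by blast
  have zero_one: "\<forall>x\<in>agents. \<forall>y\<in>agents. \<forall>a\<in>A. Delta V x y a \<in> {0, 1}"
    using binary no_chore by (intro ballI Delta_zero_one) auto
  obtain X Y C where split: "X \<inter> Y = {}" "X \<union> Y = A"
    "card (Y \<inter> {a\<in>A. Delta V k l a \<noteq> 0}) \<le> card (X \<inter> {a\<in>A. Delta V k l a \<noteq> 0})"
    "C \<subseteq> X" "card C \<le> 1"
    "card ((X - C) \<inter> {a\<in>A. Delta V l k a \<noteq> 0}) \<le> card (Y \<inter> {a\<in>A. Delta V l k a \<noteq> 0})"
    by (rule obtain_two_agent_split[OF fin])
  have "EF1 A V ((\<lambda>_. {})(k := X, l := Y))"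
    by (rule EF1_of_two_agent_split[OF agents fin zero_one indifferent split])
  then show ?thesis
    unfolding EF1_def by blast
qed

end
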